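(* Let $(G,\sigma)$ be a connected RBMG with exactly three colors $r,s,t$ that contains an induced $6$-cycle $\langle x_1y_1z_1x_2y_2z_2\rangle$ with $\sigma(x_1)=\sigma(x_2)=r$, $\sigma(y_1)=\sigma(y_2)=s$, $\sigma(z_1)=\sigma(z_2)=t$. Then every leaf-colored tree $(T,\sigma)$ that explains $(G,\sigma)$ has the following property: with $v:=\mathrm{lca}_T(x_1,x_2,y_1,y_2,z_1,z_2)$ there exist three distinct children $v_1,v_2,v_3\in\mathrm{child}(v)$ such that either $x_1,y_1\preceq_T v_1$, $x_2,z_1\preceq_T v_2$, $y_2,z_2\preceq_T v_3$, or $y_1,z_1\preceq_T v_1$, $x_2,y_2\preceq_T v_2$, $x_1,z_2\preceq_T v_3$.
   Context: A planted phylogenetic tree $T$ is a rooted tree with distinguished root $0_T$ of degree $1$, all other non-leaf vertices of degree $\ge3$; $L(T)$ its leaves (excluding $0_T$), $|L(T)|\ge2$. $\preceq_T$ is the ancestor order towards $0_T$; $T(v)$, $\mathrm{child}(v)$, $\mathrm{lca}_T$ as usual. $\sigma$ maps $L(T)$ to a set of colors. $y$ is a best match of $x$ if $\sigma(x)\ne\sigma(y)$ and $\mathrm{lca}_T(x,y)\preceq_T\mathrm{lca}_T(x,y')$ for all $y'$ with $\sigma(y')=\sigma(y)$. The RBMG $G(T,\sigma)$ is the vertex-colored undirected graph on $L(T)$ whose edges are reciprocal best match pairs; a vertex-colored graph $(G,\sigma)$ is an RBMG if it equals $G(T,\sigma)$ for some leaf-colored tree $(T,\sigma)$, in which case $(T,\sigma)$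 explains $(G,\sigma)$. The cycle $\langle x_1y_1z_1x_2y_2z_2\rangle$ has edges $x_1y_1,y_1z_1,z_1x_2,x_2y_2,y_2z_2,z_2x_1$, and induced means no other edges among these six vertices. *)

theory Defs
  imports Main
begin

text \<open>A rooted tree is given by a finite vertex set V, a set E of edges directed
  away from the root (pairs (parent, child)), and a root rt.\<close>

definition children :: "('v \<times> 'v) set \<Rightarrow> 'v \<Rightarrow> 'v set" where
  "children E v = {u. (v, u) \<in> E}"

definition leaves :: "'v set \<Rightarrow> ('v \<times> 'v) set \<Rightarrow> 'v \<Rightarrow> 'v set" where
  "leaves V E rt = {v \<in> V. v \<noteq> rt \<and> children E v = {}}"

definition rooted_tree :: "'v set \<Rightarrow> ('v \<times> 'v) set \<Rightarrow> 'v \<Rightarrow> bool" where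
  "rooted_tree V E rt \<longleftrightarrow> finite V \<and> rt \<in> V \<and> E \<subseteq> V \<times> V
     \<and> (\<forall>v\<in>V. (rt, v) \<in> E\<^sup>*)
     \<and> (\<forall>u. (u, rt) \<notin> E)
     \<and> (\<forall>v\<in>V - {rt}. \<exists>!u. (u, v) \<in> E)"

text \<open>Planted phylogenetic tree: root of degree 1 (exactly one child), every other
  non-leaf vertex has degree at least 3 (at least two children), and at least two leaves.\<close>

definition planted_phylo_tree :: "'v set \<Rightarrow> ('v \<times> 'v) set \<Rightarrow> 'v \<Rightarrow> bool" where
  "planted_phylo_tree V E rt \<longleftrightarrow> rooted_tree V E rt
     \<and> card (children E rt) = 1
     \<and> (\<forall>v\<in>V - {rt}. children E v \<noteq> {} \<longrightarrow> card (children E v) \<ge> 2)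
     \<and> card (leaves V E rt) \<ge> 2"

definition anc_le :: "('v \<times> 'v) set \<Rightarrow> 'v \<Rightarrow> 'v \<Rightarrow> bool" where
  "anc_le E x y \<longleftrightarrow> (y, x) \<in> E\<^sup>*"

definition lca :: "'v set \<Rightarrow> ('v \<times> 'v) set \<Rightarrow> 'v set \<Rightarrow> 'v" where
  "lca V E A = (THE w. w \<in> V \<and> (\<forall>a\<in>A. anc_le E a w)
       \<and> (\<forall>u\<in>V. (\<forall>a\<in>A. anc_le E a u) \<longrightarrow> anc_le E w u))"

definition best_match :: "'v set \<Rightarrow> ('v \<times> 'v) set \<Rightarrow> 'v \<Rightarrow> ('v \<Rightarrow> 'c) \<Rightarrow> 'v \<Rightarrow> 'v \<Rightarrow> bool" where
  "best_match V E rt \<sigma> x y \<longleftrightarrow> x \<in> leaves V E rt \<and> y \<in> leaves V E rt \<and> \<sigma> x \<noteq> \<sigma> y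
     \<and> (\<forall>y'\<in>leaves V E rt. \<sigma> y' = \<sigma> y \<longrightarrow> anc_le E (lca V E {x, y}) (lca V E {x, y'}))"

definition explains :: "'v set \<Rightarrow> ('v \<times> 'v) set \<Rightarrow> 'v \<Rightarrow> ('v \<Rightarrow> 'c) \<Rightarrow> 'v set \<Rightarrow> ('v \<times> 'v) set \<Rightarrow> bool" where
  "explains V E rt \<sigma> X EG \<longleftrightarrow> planted_phylo_tree V E rt \<and> X = leaves V E rt
     \<and> (\<forall>x y. (x, y) \<in> EG \<longleftrightarrow> best_match V E rt \<sigma> x y \<and> best_match V E rt \<sigma> y x)"

definition is_RBMG :: "'v set \<Rightarrow> ('v \<times> 'v) set \<Rightarrow> ('v \<Rightarrow> 'c) \<Rightarrow> bool" where
  "is_RBMG X EG \<sigma> \<longleftrightarrow> (\<exists>V E rt. explains V E rt \<sigma> X EG)"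

definition graph_connected :: "'v set \<Rightarrow> ('v \<times> 'v) set \<Rightarrow> bool" where
  "graph_connected X EG \<longleftrightarrow> (\<forall>x\<in>X. \<forall>y\<in>X. (x, y) \<in> (EG \<inter> X \<times> X)\<^sup>*)"

definition induced_6cycle :: "'v set \<Rightarrow> ('v \<times> 'v) set \<Rightarrow> 'v list \<Rightarrow> bool" where
  "induced_6cycle X EG cs \<longleftrightarrow> length cs = 6 \<and> distinct cs \<and> set cs \<subseteq> X
     \<and> (\<forall>i<6. \<forall>j<6. (cs ! i, cs ! j) \<in> EG \<longleftrightarrow> (j = (i + 1) mod 6 \<or> i = (j + 1) mod 6))"

end

theory Submission
  imports Defs
begin

text \<open>Let \<open>v\<close> be the lca of the six cycle vertices and assign to each of them the child of \<open>v\<close>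
  above it. For leaves \<open>a\<close>, \<open>b\<close> below distinct children \<open>c\<^sub>a\<close>, \<open>c\<^sub>b\<close> of \<open>v\<close>, \<open>b\<close> is a best match
  of \<open>a\<close> exactly if no leaf of colour \<open>\<sigma>(b)\<close> lies below \<open>c\<^sub>a\<close>. Hence the edges and non-edges of
  the induced 6-cycle translate into statements about which colours occur below which
  children. A finite case analysis then shows that consecutive cycle vertices lie alternately
  below the same and below different children (not all six lie below one child, as \<open>v\<close> is
  their lca), which gives exactly the two claimed groupings.\<close>

definition depth :: "('v \<times> 'v) set \<Rightarrow> 'v \<Rightarrow> 'v \<Rightarrow> nat" where
  "depth E rt v = (LEAST n. (rt, v) \<in> E ^^ n)"

definition subtree_colors :: "'v set \<Rightarrow> ('v \<times> 'v) set \<Rightarrow> 'v \<Rightarrow> ('v \<Rightarrow> 'c) \<Rightarrow> 'v \<Rightarrow> 'c set" where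
  "subtree_colors V E rt \<sigma> c = \<sigma> ` {y \<in> leaves V E rt. (c, y) \<in> E\<^sup>*}"

context
  fixes V :: "'v set" and E :: "('v \<times> 'v) set" and rt :: 'v
  assumes tree: "rooted_tree V E rt"
begin

lemma edge_in_vertices: "(u, w) \<in> E \<Longrightarrow> u \<in> V \<and> w \<in> V"
  using tree unfolding rooted_tree_def by blast

lemma parent_unique: "(u, w) \<in> E \<Longrightarrow> (u', w) \<in> E \<Longrightarrow> u' = u"
  using tree edge_in_vertices unfolding rooted_tree_def by blast

lemma depth_edge:
  assumes uw: "(u, w) \<in> E"
  shows "depth E rt w = Suc (depth E rt u)"
proof -
  have "(rt, u) \<in> E\<^sup>*" using tree edge_in_vertices[OF uw] unfolding rooted_tree_def by blast
  then obtain n where "(rt, u) \<in> E ^^ n" using rtrancl_power by blast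
  hence "(rt, u) \<in> E ^^ depth E rt u" unfolding depth_def by (rule LeastI)
  hence "(rt, w) \<in> E ^^ Suc (depth E rt u)" using uw by auto
  hence le: "depth E rt w \<le> Suc (depth E rt u)" unfolding depth_def by (rule Least_le)
  have dw: "(rt, w) \<in> E ^^ depth E rt w" unfolding depth_def by (rule LeastI) fact
  have "w \<noteq> rt" using tree uw unfolding rooted_tree_def by blast
  then obtain m where m: "depth E rt w = Suc m" using dw by (cases "depth E rt w") auto
  with dw obtain p where "(rt, p) \<in> E ^^ m" and "(p, w) \<in> E" by auto
  hence "(rt, u) \<in> E ^^ m" using parent_unique[OF uw] by blast
  hence "depth E rt u \<le> m" unfolding depth_def by (rule Least_le)
  thus ?thesis using le m by simp
qed

lemma depth_less: "(u, w) \<in> E\<^sup>+ \<Longrightarrow> depth E rt u < depth E rt w"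
  by (induction rule: trancl_induct) (simp_all add: depth_edge)

lemma acyclic_tree: "acyclic E"
  unfolding acyclic_def using depth_less by blast

lemma ancestor_antisym: "(u, w) \<in> E\<^sup>* \<Longrightarrow> (w, u) \<in> E\<^sup>* \<Longrightarrow> u = w"
  using acyclic_tree unfolding acyclic_def
  by (metis rtrancl_eq_or_trancl rtrancl_trancl_trancl)

lemma ancestors_linear:
  assumes "(a, x) \<in> E\<^sup>*" "(b, x) \<in> E\<^sup>*"
  shows "(a, b) \<in> E\<^sup>* \<or> (b, a) \<in> E\<^sup>*"
  using assms(2,1)
proof (induction arbitrary: a rule: rtrancl_induct)
  case base
  thus ?case by simp
next
  case (step y z)
  show ?case
  proof (cases "a = z")
    case True
    thus ?thesis using step.hyps by (meson rtrancl.rtrancl_into_rtrancl)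
  next
    case False
    then obtain p where "(a, p) \<in> E\<^sup>*" "(p, z) \<in> E" using step.prems by (meson rtranclE)
    thus ?thesis using step parent_unique by blast
  qed
qed

lemma children_below_unique:
  assumes "(v, c) \<in> E" "(v, c') \<in> E" "(c, a) \<in> E\<^sup>*" "(c', a) \<in> E\<^sup>*"
  shows "c = c'"
proof (rule ccontr)
  assume "c \<noteq> c'"
  hence "(c, c') \<in> E\<^sup>+ \<or> (c', c) \<in> E\<^sup>+"
    using ancestors_linear[OF assms(3,4)] by (auto simp: rtrancl_eq_or_trancl)
  moreover have "depth E rt c = depth E rt c'" using depth_edge assms(1,2) by simp
  ultimately show False using depth_less by fastforce
qed

lemma descendant_child:
  assumes "(v, u) \<in> E\<^sup>*" "u \<noteq> v"
  obtains c where "(v, c) \<in> E" "(c, u) \<in> E\<^sup>*"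
proof -
  have "(v, u) \<in> E\<^sup>+" using assms by (simp add: rtrancl_eq_or_trancl)
  thus thesis using that by (blast dest: tranclD)
qed

lemma lca_eqI:
  assumes "w \<in> V" "\<forall>a\<in>A. anc_le E a w" "\<forall>u\<in>V. (\<forall>a\<in>A. anc_le E a u) \<longrightarrow> anc_le E w u"
  shows "lca V E A = w"
  unfolding lca_def
proof (rule the_equality)
  fix w'
  assume "w' \<in> V \<and> (\<forall>a\<in>A. anc_le E a w') \<and> (\<forall>u\<in>V. (\<forall>a\<in>A. anc_le E a u) \<longrightarrow> anc_le E w' u)"
  thus "w' = w"
    using assms ancestor_antisym unfolding anc_le_def by blast
qed (use assms in blast)

lemma lca_exists:
  assumes "A \<subseteq> V" "A \<noteq> {}"
  shows "\<exists>w\<in>V. (\<forall>a\<in>A. anc_le E a w) \<and> (\<forall>u\<in>V. (\<forall>a\<in>A. anc_le E a u) \<longrightarrow> anc_le E w u)"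
proof -
  define CA where "CA = {u\<in>V. \<forall>a\<in>A. (u, a) \<in> E\<^sup>*}"
  have fin: "finite CA" using tree unfolding CA_def rooted_tree_def by auto
  have "rt \<in> CA" using tree assms unfolding CA_def rooted_tree_def by blast
  hence "depth E rt ` CA \<noteq> {}" by blast
  hence "Max (depth E rt ` CA) \<in> depth E rt ` CA" using fin by simp
  then obtain w where wC: "w \<in> CA" and wmax_eq: "depth E rt w = Max (depth E rt ` CA)" by auto
  have wmax: "\<forall>u\<in>CA. depth E rt u \<le> depth E rt w" unfolding wmax_eq using fin by simp
  obtain a0 where a0: "a0 \<in> A" using assms by blast
  have "anc_le E w u" if uV: "u \<in> V" and ua: "\<forall>a\<in>A. anc_le E a u" for u
  proof -
    have uC: "u \<in> CA" using uV ua unfolding CA_def anc_le_def by blast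
    have "(u, w) \<in> E\<^sup>* \<or> (w, u) \<in> E\<^sup>*"
      using ancestors_linear uC wC a0 unfolding CA_def by blast
    moreover have "(w, u) \<notin> E\<^sup>+"
      using depth_less wmax uC by fastforce
    ultimately show ?thesis unfolding anc_le_def by (auto simp: rtrancl_eq_or_trancl)
  qed
  thus ?thesis using wC unfolding CA_def anc_le_def by blast
qed

lemma lca_props:
  assumes "A \<subseteq> V" "A \<noteq> {}"
  shows "lca V E A \<in> V" "\<forall>a\<in>A. anc_le E a (lca V E A)"
    "\<forall>u\<in>V. (\<forall>a\<in>A. anc_le E a u) \<longrightarrow> anc_le E (lca V E A) u"
  using lca_exists[OF assms] lca_eqI by metis+

lemma lca_not_below_child:
  assumes "A \<subseteq> V" "A \<noteq> {}" "(lca V E A, c) \<in> E"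
  shows "\<not> (\<forall>a\<in>A. (c, a) \<in> E\<^sup>*)"
proof
  assume "\<forall>a\<in>A. (c, a) \<in> E\<^sup>*"
  hence "(c, lca V E A) \<in> E\<^sup>*"
    using lca_props[OF assms(1,2)] edge_in_vertices[OF assms(3)] unfolding anc_le_def by blast
  thus False using assms(3) acyclic_tree unfolding acyclic_def by (meson rtrancl_into_trancl2)
qed

lemma leaf_no_descendant: "a \<in> leaves V E rt \<Longrightarrow> (a, b) \<in> E\<^sup>* \<Longrightarrow> b = a"
  unfolding leaves_def children_def by (auto elim: converse_rtranclE)

lemma leaf_below_child_of_lca:
  assumes "A \<subseteq> leaves V E rt" "a \<in> A" "b \<in> A" "b \<noteq> a"
  obtains c where "(lca V E A, c) \<in> E" "(c, a) \<in> E\<^sup>*"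
proof -
  have "A \<subseteq> V" using assms(1) unfolding leaves_def by auto
  hence "(lca V E A, a) \<in> E\<^sup>*" "(lca V E A, b) \<in> E\<^sup>*"
    using lca_props(2) assms(2,3) unfolding anc_le_def by blast+
  hence "lca V E A \<noteq> a" using leaf_no_descendant assms by blast
  thus ?thesis using that descendant_child \<open>(lca V E A, a) \<in> E\<^sup>*\<close> by blast
qed

lemma children_of_lca_above_leaves:
  assumes in_leaves: "set xs \<subseteq> leaves V E rt" and "distinct xs" "2 \<le> length xs"
  obtains c where "\<forall>i<length xs. (lca V E (set xs), c i) \<in> E \<and> (c i, xs ! i) \<in> E\<^sup>*"
    and "\<not> (\<forall>i<length xs. c i = c 0)"
proof -
  have len: "0 < length xs" "1 < length xs" using assms(3) by auto
  have "xs ! 0 \<noteq> xs ! 1" using assms(2) len by (simp add: nth_eq_iff_index_eq)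
  hence other: "\<exists>b\<in>set xs. b \<noteq> a" for a
    using nth_mem[OF len(1)] nth_mem[OF len(2)] by metis
  have "\<exists>c. (lca V E (set xs), c) \<in> E \<and> (c, xs ! i) \<in> E\<^sup>*" if "i < length xs" for i
    using leaf_below_child_of_lca[OF in_leaves nth_mem[OF that]] other by blast
  then obtain c where c: "\<forall>i<length xs. (lca V E (set xs), c i) \<in> E \<and> (c i, xs ! i) \<in> E\<^sup>*"
    by metis
  have "set xs \<subseteq> V" "set xs \<noteq> {}" using in_leaves len unfolding leaves_def by auto
  moreover have "(lca V E (set xs), c 0) \<in> E" using c len(1) by blast
  ultimately have not_below_c0: "\<not> (\<forall>a\<in>set xs. (c 0, a) \<in> E\<^sup>*)"
    by (rule lca_not_below_child)
  have "\<not> (\<forall>i<length xs. c i = c 0)"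
  proof
    assume "\<forall>i<length xs. c i = c 0"
    hence "\<forall>a\<in>set xs. (c 0, a) \<in> E\<^sup>*" using c by (metis in_set_conv_nth)
    thus False using not_below_c0 by contradiction
  qed
  with c show thesis by (rule that)
qed

lemma lca_of_siblings:
  assumes "(v, ca) \<in> E" "(v, cb) \<in> E" "ca \<noteq> cb" "(ca, a) \<in> E\<^sup>*" "(cb, b) \<in> E\<^sup>*"
  shows "lca V E {a, b} = v"
proof (rule lca_eqI)
  show "v \<in> V" using edge_in_vertices assms(1) by blast
  have va: "(v, a) \<in> E\<^sup>*" and vb: "(v, b) \<in> E\<^sup>*"
    using assms by (meson converse_rtrancl_into_rtrancl)+
  thus "\<forall>x\<in>{a, b}. anc_le E x v" unfolding anc_le_def by blast
  show "\<forall>u\<in>V. (\<forall>x\<in>{a, b}. anc_le E x u) \<longrightarrow> anc_le E v u"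
  proof (intro ballI impI)
    fix u
    assume "\<forall>x\<in>{a, b}. anc_le E x u"
    hence ua: "(u, a) \<in> E\<^sup>*" and ub: "(u, b) \<in> E\<^sup>*" unfolding anc_le_def by auto
    show "anc_le E v u"
    proof (rule ccontr)
      assume "\<not> anc_le E v u"
      hence "(v, u) \<in> E\<^sup>*" "u \<noteq> v" using ancestors_linear[OF va ua] unfolding anc_le_def by auto
      then obtain c where "(v, c) \<in> E" "(c, u) \<in> E\<^sup>*" by (rule descendant_child)
      hence "c = ca" and "c = cb"
        using children_below_unique assms ua ub by (meson rtrancl_trans)+
      thus False using assms(3) by simp
    qed
  qed
qed

lemma best_match_sibling_lacks_color:
  assumes "(v, ca) \<in> E" "(v, cb) \<in> E" "ca \<noteq> cb" "(ca, a) \<in> E\<^sup>*" "(cb, b) \<in> E\<^sup>*"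
    and in_leaves: "a \<in> leaves V E rt" and bm: "best_match V E rt \<sigma> a b"
  shows "\<sigma> b \<notin> subtree_colors V E rt \<sigma> ca"
proof
  assume "\<sigma> b \<in> subtree_colors V E rt \<sigma> ca"
  then obtain y where yL: "y \<in> leaves V E rt" and ys: "\<sigma> y = \<sigma> b" and cy: "(ca, y) \<in> E\<^sup>*"
    unfolding subtree_colors_def by force
  have ay: "{a, y} \<subseteq> V" "{a, y} \<noteq> {}" using in_leaves yL unfolding leaves_def by auto
  have "anc_le E (lca V E {a, y}) ca"
    using lca_props(3)[OF ay] edge_in_vertices[OF assms(1)] assms(4) cy
    unfolding anc_le_def by blast
  moreover have "anc_le E v (lca V E {a, y})"
    using bm yL ys lca_of_siblings[OF assms(1-5)] unfolding best_match_def by auto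
  ultimately have "(ca, v) \<in> E\<^sup>*" unfolding anc_le_def by (rule rtrancl_trans)
  hence "(v, v) \<in> E\<^sup>+" by (rule rtrancl_into_trancl2[OF assms(1)])
  thus False using acyclic_tree unfolding acyclic_def by blast
qed

lemma best_match_if_sibling_lacks_color:
  assumes "(v, ca) \<in> E" "(v, cb) \<in> E" "ca \<noteq> cb" "(ca, a) \<in> E\<^sup>*" "(cb, b) \<in> E\<^sup>*"
    and in_leaves: "a \<in> leaves V E rt" "b \<in> leaves V E rt"
    and nocol: "\<sigma> b \<notin> subtree_colors V E rt \<sigma> ca"
  shows "best_match V E rt \<sigma> a b"
proof -
  have "\<sigma> a \<in> subtree_colors V E rt \<sigma> ca"
    using in_leaves assms(4) unfolding subtree_colors_def by blast
  hence "\<sigma> a \<noteq> \<sigma> b" using nocol by auto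
  moreover have "anc_le E v (lca V E {a, y})"
    if yL: "y \<in> leaves V E rt" and ys: "\<sigma> y = \<sigma> b" for y
  proof (rule ccontr)
    define w where "w = lca V E {a, y}"
    have "{a, y} \<subseteq> V" "{a, y} \<noteq> {}" using in_leaves yL unfolding leaves_def by auto
    hence wa: "(w, a) \<in> E\<^sup>*" and wy: "(w, y) \<in> E\<^sup>*"
      using lca_props(2) unfolding w_def anc_le_def by auto
    have va: "(v, a) \<in> E\<^sup>*" using assms(1,4) by (meson converse_rtrancl_into_rtrancl)
    assume "\<not> anc_le E v (lca V E {a, y})"
    hence "(v, w) \<in> E\<^sup>*" "w \<noteq> v"
      using ancestors_linear[OF va wa] unfolding w_def anc_le_def by auto
    then obtain c where "(v, c) \<in> E" "(c, w) \<in> E\<^sup>*" by (rule descendant_child)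
    hence "c = ca" using children_below_unique assms(1,4) wa by (meson rtrancl_trans)
    hence "(ca, y) \<in> E\<^sup>*" using \<open>(c, w) \<in> E\<^sup>*\<close> wy by (meson rtrancl_trans)
    thus False using nocol yL ys unfolding subtree_colors_def by (auto simp: image_iff)
  qed
  ultimately show ?thesis
    using in_leaves lca_of_siblings[OF assms(1-5)] unfolding best_match_def by blast
qed

lemma best_match_between_siblings_iff:
  assumes "(v, ca) \<in> E" "(v, cb) \<in> E" "ca \<noteq> cb" "(ca, a) \<in> E\<^sup>*" "(cb, b) \<in> E\<^sup>*"
    and "a \<in> leaves V E rt" "b \<in> leaves V E rt"
  shows "best_match V E rt \<sigma> a b \<longleftrightarrow> \<sigma> b \<notin> subtree_colors V E rt \<sigma> ca"
  using best_match_sibling_lacks_color[OF assms(1-6)] best_match_if_sibling_lacks_color[OF assms]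
  by blast

end

lemma explains_edge_between_siblings_iff:
  assumes "explains V E rt \<sigma> X EG"
    and "(v, ca) \<in> E" "(v, cb) \<in> E" "ca \<noteq> cb" "(ca, a) \<in> E\<^sup>*" "(cb, b) \<in> E\<^sup>*"
    and "a \<in> X" "b \<in> X"
  shows "(a, b) \<in> EG \<longleftrightarrow>
    \<sigma> b \<notin> subtree_colors V E rt \<sigma> ca \<and> \<sigma> a \<notin> subtree_colors V E rt \<sigma> cb"
  using assms best_match_between_siblings_iff[of V E rt v ca cb a b \<sigma>]
    best_match_between_siblings_iff[of V E rt v cb ca b a \<sigma>]
  unfolding explains_def planted_phylo_tree_def by auto

text \<open>In the application \<open>c i\<close> is the child of the lca above the \<open>i\<close>-th cycle vertex and
  \<open>C (c i)\<close> the set of colours of the leaves below it.\<close>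

lemma six_cycle_sibling_pattern:
  fixes c :: "nat \<Rightarrow> 'a" and C :: "'a \<Rightarrow> 'c set" and col :: "nat \<Rightarrow> 'c"
  assumes "r \<noteq> s" "r \<noteq> t" "s \<noteq> t"
    and col: "map col [0..<6] = [r, s, t, r, s, t]"
    and own: "\<forall>i<6. col i \<in> C (c i)"
    and adj: "\<forall>i<6. \<forall>j<6. c i \<noteq> c j \<longrightarrow>
      ((j = (i + 1) mod 6 \<or> i = (j + 1) mod 6) \<longleftrightarrow> col j \<notin> C (c i) \<and> col i \<notin> C (c j))"
    and not_all: "\<not> (\<forall>i<6. c i = c 0)"
  shows "(c 0 = c 1 \<and> c 2 = c 3 \<and> c 4 = c 5 \<and> distinct [c 0, c 2, c 4])
       \<or> (c 1 = c 2 \<and> c 3 = c 4 \<and> c 5 = c 0 \<and> distinct [c 1, c 3, c 5])"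
proof -
  have "col 0 = r" "col 1 = s" "col 2 = t" "col 3 = r" "col 4 = s" "col 5 = t"
    using col by (simp_all add: upt_rec numeral_eq_Suc)
  hence "r \<in> C (c 0)" "s \<in> C (c 1)" "t \<in> C (c 2)" "r \<in> C (c 3)" "s \<in> C (c 4)" "t \<in> C (c 5)"
    and "c 0 \<noteq> c 1 \<Longrightarrow> s \<notin> C (c 0) \<and> r \<notin> C (c 1)"
    "c 1 \<noteq> c 2 \<Longrightarrow> t \<notin> C (c 1) \<and> s \<notin> C (c 2)"
    "c 2 \<noteq> c 3 \<Longrightarrow> r \<notin> C (c 2) \<and> t \<notin> C (c 3)"
    "c 3 \<noteq> c 4 \<Longrightarrow> s \<notin> C (c 3) \<and> r \<notin> C (c 4)"
    "c 4 \<noteq> c 5 \<Longrightarrow> t \<notin> C (c 4) \<and> s \<notin> C (c 5)"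
    "c 5 \<noteq> c 0 \<Longrightarrow> r \<notin> C (c 5) \<and> t \<notin> C (c 0)"
    and "c 0 \<noteq> c 2 \<Longrightarrow> t \<in> C (c 0) \<or> r \<in> C (c 2)"
    "c 0 \<noteq> c 4 \<Longrightarrow> s \<in> C (c 0) \<or> r \<in> C (c 4)"
    "c 1 \<noteq> c 3 \<Longrightarrow> r \<in> C (c 1) \<or> s \<in> C (c 3)"
    "c 1 \<noteq> c 5 \<Longrightarrow> t \<in> C (c 1) \<or> s \<in> C (c 5)"
    "c 2 \<noteq> c 4 \<Longrightarrow> s \<in> C (c 2) \<or> t \<in> C (c 4)"
    "c 3 \<noteq> c 5 \<Longrightarrow> t \<in> C (c 3) \<or> r \<in> C (c 5)"
    using own[rule_format, of 0] own[rule_format, of 1] own[rule_format, of 2]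
      own[rule_format, of 3] own[rule_format, of 4] own[rule_format, of 5]
      adj[rule_format, of 0 1] adj[rule_format, of 1 2] adj[rule_format, of 2 3]
      adj[rule_format, of 3 4] adj[rule_format, of 4 5] adj[rule_format, of 5 0]
      adj[rule_format, of 0 2] adj[rule_format, of 0 4] adj[rule_format, of 1 3]
      adj[rule_format, of 1 5] adj[rule_format, of 2 4] adj[rule_format, of 3 5]
    by simp_all
  moreover have "\<not> (c 0 = c 1 \<and> c 1 = c 2 \<and> c 2 = c 3 \<and> c 3 = c 4 \<and> c 4 = c 5)"
    using not_all by (auto simp: less_Suc_eq numeral_eq_Suc)
  ultimately have no_adjacent_breaks:
      "c 0 = c 1 \<or> c 1 = c 2" "c 1 = c 2 \<or> c 2 = c 3" "c 2 = c 3 \<or> c 3 = c 4"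
      "c 3 = c 4 \<or> c 4 = c 5" "c 4 = c 5 \<or> c 5 = c 0" "c 5 = c 0 \<or> c 0 = c 1"
    and no_three_in_a_row:
      "c 0 \<noteq> c 1 \<or> c 1 \<noteq> c 2" "c 1 \<noteq> c 2 \<or> c 2 \<noteq> c 3" "c 2 \<noteq> c 3 \<or> c 3 \<noteq> c 4"
      "c 3 \<noteq> c 4 \<or> c 4 \<noteq> c 5" "c 4 \<noteq> c 5 \<or> c 5 \<noteq> c 0" "c 5 \<noteq> c 0 \<or> c 0 \<noteq> c 1"
    using assms(1-3) by metis+
  from no_adjacent_breaks no_three_in_a_row show ?thesis by auto
qed

lemma explained_six_cycle_children_pattern:
  fixes x1 y1 z1 x2 y2 z2 :: 'v
  defines "xs \<equiv> [x1, y1, z1, x2, y2, z2]"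
  assumes expl: "explains V E rt \<sigma> X EG"
    and cyc: "induced_6cycle X EG xs"
    and colors: "r \<noteq> s" "r \<noteq> t" "s \<noteq> t"
    and cx: "\<sigma> x1 = r" "\<sigma> x2 = r"
    and cy: "\<sigma> y1 = s" "\<sigma> y2 = s"
    and cz: "\<sigma> z1 = t" "\<sigma> z2 = t"
  obtains c where "\<forall>i<6. (lca V E (set xs), c i) \<in> E \<and> (c i, xs ! i) \<in> E\<^sup>*"
    and "(c 0 = c 1 \<and> c 2 = c 3 \<and> c 4 = c 5 \<and> distinct [c 0, c 2, c 4])
       \<or> (c 1 = c 2 \<and> c 3 = c 4 \<and> c 5 = c 0 \<and> distinct [c 1, c 3, c 5])"
proof -
  have tree: "rooted_tree V E rt" and X: "X = leaves V E rt"
    using expl unfolding explains_def planted_phylo_tree_def by auto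
  have xs: "length xs = 6" "distinct xs" "set xs \<subseteq> X"
    and adj: "\<forall>i<6. \<forall>j<6. (xs ! i, xs ! j) \<in> EG \<longleftrightarrow> (j = (i + 1) mod 6 \<or> i = (j + 1) mod 6)"
    using cyc unfolding induced_6cycle_def xs_def by auto
  obtain c where c: "\<forall>i<6. (lca V E (set xs), c i) \<in> E \<and> (c i, xs ! i) \<in> E\<^sup>*"
    and not_all: "\<not> (\<forall>i<6. c i = c 0)"
    using children_of_lca_above_leaves[OF tree, of xs] xs X by auto
  have "map (\<lambda>i. \<sigma> (xs ! i)) [0..<6] = [r, s, t, r, s, t]"
    using cx cy cz unfolding xs_def by (simp add: upt_rec)
  moreover have "\<forall>i<6. \<sigma> (xs ! i) \<in> subtree_colors V E rt \<sigma> (c i)"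
    using c xs X unfolding subtree_colors_def by (auto intro!: image_eqI)
  moreover have "\<forall>i<6. \<forall>j<6. c i \<noteq> c j \<longrightarrow>
      ((j = (i + 1) mod 6 \<or> i = (j + 1) mod 6) \<longleftrightarrow>
        \<sigma> (xs ! j) \<notin> subtree_colors V E rt \<sigma> (c i) \<and> \<sigma> (xs ! i) \<notin> subtree_colors V E rt \<sigma> (c j))"
  proof (intro allI impI)
    fix i j
    assume ij: "i < 6" "j < 6" and "c i \<noteq> c j"
    moreover have "xs ! i \<in> X" "xs ! j \<in> X" using ij xs by (metis nth_mem subsetD)+
    ultimately have "(xs ! i, xs ! j) \<in> EG \<longleftrightarrow>
        \<sigma> (xs ! j) \<notin> subtree_colors V E rt \<sigma> (c i) \<and> \<sigma> (xs ! i) \<notin> subtree_colors V E rt \<sigma> (c j)"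
      using explains_edge_between_siblings_iff[OF expl] c by blast
    thus "(j = (i + 1) mod 6 \<or> i = (j + 1) mod 6) \<longleftrightarrow>
        \<sigma> (xs ! j) \<notin> subtree_colors V E rt \<sigma> (c i) \<and> \<sigma> (xs ! i) \<notin> subtree_colors V E rt \<sigma> (c j)"
      using adj ij by simp
  qed
  ultimately have "(c 0 = c 1 \<and> c 2 = c 3 \<and> c 4 = c 5 \<and> distinct [c 0, c 2, c 4])
      \<or> (c 1 = c 2 \<and> c 3 = c 4 \<and> c 5 = c 0 \<and> distinct [c 1, c 3, c 5])"
    by (rule six_cycle_sibling_pattern[OF colors _ _ _ not_all])
  with c show thesis by (rule that)
qed

lemma explained_six_cycle_children_split:
  assumes expl: "explains V E rt \<sigma> X EG"
    and cyc: "induced_6cycle X EG [x1, y1, z1, x2, y2, z2]"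
    and colors: "r \<noteq> s" "r \<noteq> t" "s \<noteq> t"
    and cx: "\<sigma> x1 = r" "\<sigma> x2 = r"
    and cy: "\<sigma> y1 = s" "\<sigma> y2 = s"
    and cz: "\<sigma> z1 = t" "\<sigma> z2 = t"
  shows "let v = lca V E {x1, x2, y1, y2, z1, z2} in
     \<exists>v1\<in>children E v. \<exists>v2\<in>children E v. \<exists>v3\<in>children E v.
       v1 \<noteq> v2 \<and> v1 \<noteq> v3 \<and> v2 \<noteq> v3 \<and>
       ((anc_le E x1 v1 \<and> anc_le E y1 v1 \<and> anc_le E x2 v2 \<and> anc_le E z1 v2
          \<and> anc_le E y2 v3 \<and> anc_le E z2 v3)
        \<or> (anc_le E y1 v1 \<and> anc_le E z1 v1 \<and> anc_le E x2 v2 \<and> anc_le E y2 v2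
          \<and> anc_le E x1 v3 \<and> anc_le E z2 v3))"
proof -
  define v where "v = lca V E {x1, x2, y1, y2, z1, z2}"
  have v: "lca V E (set [x1, y1, z1, x2, y2, z2]) = v" unfolding v_def by (simp add: insert_commute)
  obtain c where c: "\<forall>i<6. (v, c i) \<in> E \<and> (c i, [x1, y1, z1, x2, y2, z2] ! i) \<in> E\<^sup>*"
    and pattern: "(c 0 = c 1 \<and> c 2 = c 3 \<and> c 4 = c 5 \<and> distinct [c 0, c 2, c 4])
       \<or> (c 1 = c 2 \<and> c 3 = c 4 \<and> c 5 = c 0 \<and> distinct [c 1, c 3, c 5])"
    by (rule explained_six_cycle_children_pattern[OF expl cyc colors cx cy cz, unfolded v])
  have children: "c 0 \<in> children E v" "c 1 \<in> children E v" "c 2 \<in> children E v"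
    "c 3 \<in> children E v" "c 4 \<in> children E v" "c 5 \<in> children E v"
    using c unfolding children_def by simp_all
  have below_nth: "anc_le E ([x1, y1, z1, x2, y2, z2] ! i) (c i)" if "i < 6" for i
    using c that unfolding anc_le_def by blast
  have below: "anc_le E x1 (c 0)" "anc_le E y1 (c 1)" "anc_le E z1 (c 2)"
    "anc_le E x2 (c 3)" "anc_le E y2 (c 4)" "anc_le E z2 (c 5)"
    using below_nth[of 0] below_nth[of 1] below_nth[of 2] below_nth[of 3] below_nth[of 4]
      below_nth[of 5]
    by simp_all
  show ?thesis
  proof (cases "c 0 = c 1 \<and> c 2 = c 3 \<and> c 4 = c 5 \<and> distinct [c 0, c 2, c 4]")
    case True
    thus ?thesis unfolding Let_def v_def[symmetric] using children below
      by (intro bexI[of _ "c 0"] bexI[of _ "c 2"] bexI[of _ "c 4"]) auto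
  next
    case False
    hence "c 1 = c 2 \<and> c 3 = c 4 \<and> c 5 = c 0 \<and> distinct [c 1, c 3, c 5]" using pattern by blast
    thus ?thesis unfolding Let_def v_def[symmetric] using children below
      by (intro bexI[of _ "c 1"] bexI[of _ "c 3"] bexI[of _ "c 5"]) auto
  qed
qed

theorem mainTheorem18:
  fixes X :: "'v set" and EG :: "('v \<times> 'v) set" and \<sigma> :: "'v \<Rightarrow> 'c"
    and r s t :: 'c and x1 y1 z1 x2 y2 z2 :: 'v
  assumes rbmg: "is_RBMG X EG \<sigma>"
    and conn: "graph_connected X EG"
    and colors: "\<sigma> ` X = {r, s, t}" "r \<noteq> s" "r \<noteq> t" "s \<noteq> t"
    and cyc: "induced_6cycle X EG [x1, y1, z1, x2, y2, z2]"
    and cx: "\<sigma> x1 = r" "\<sigma> x2 = r"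
    and cy: "\<sigma> y1 = s" "\<sigma> y2 = s"
    and cz: "\<sigma> z1 = t" "\<sigma> z2 = t"
  shows "\<forall>V E rt. explains V E rt \<sigma> X EG \<longrightarrow>
    (let v = lca V E {x1, x2, y1, y2, z1, z2} in
     \<exists>v1\<in>children E v. \<exists>v2\<in>children E v. \<exists>v3\<in>children E v.
       v1 \<noteq> v2 \<and> v1 \<noteq> v3 \<and> v2 \<noteq> v3 \<and>
       ((anc_le E x1 v1 \<and> anc_le E y1 v1 \<and> anc_le E x2 v2 \<and> anc_le E z1 v2
          \<and> anc_le E y2 v3 \<and> anc_le E z2 v3)
        \<or> (anc_le E y1 v1 \<and> anc_le E z1 v1 \<and> anc_le E x2 v2 \<and> anc_le E y2 v2
          \<and> anc_le E x1 v3 \<and> anc_le E z2 v3)))"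
  using explained_six_cycle_children_split[OF _ cyc colors(2-4) cx cy cz] by blast

end
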